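(* Let $\mathbb{H}=\{z\in\mathbb{C}:\operatorname{Im}z>0\}$ and $z_1,z_2\in\mathbb{H}$. If $\operatorname{Re}(z_1)\ne\operatorname{Re}(z_2)$, put \[ \tilde z=\frac{\overline{z_1}z_1-\overline{z_2}z_2}{(z_1-z_2)+(\overline{z_1}-\overline{z_2})} \] (a real number). Then \[ b_{\mathbb{H},\infty}(z_1,z_2)=\begin{cases}\dfrac{2|\operatorname{Re}(z_1-z_2)|}{|z_1-\overline{z_2}|}, & \text{if } \min\{\operatorname{Re}z_1,\operatorname{Re}z_2\}<\tilde z<\max\{\operatorname{Re}z_1,\operatorname{Re}z_2\},\\[2mm] \dfrac{|z_1-z_2|}{\max\{\operatorname{Im}z_1,\operatorname{Im}z_2\}}, & \text{otherwise}.\end{cases} \]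
   Context: For a domain $G\subsetneq\mathbb{C}$ and $z_1,z_2\in G$, $b_{G,\infty}(z_1,z_2)=\sup_{w\in\partial G}\frac{|z_1-z_2|}{\max\{|z_1-w|,|z_2-w|\}}$; for $G=\mathbb{H}$, $\partial G=\mathbb{R}$. The "otherwise" case includes the case $\operatorname{Re}(z_1)=\operatorname{Re}(z_2)$. *)

theory Defs
  imports "HOL-Analysis.Analysis"
begin

definition upper_half_plane :: "complex set" where
  "upper_half_plane = {z. Im z > 0}"

definition b_inf :: "complex set \<Rightarrow> complex \<Rightarrow> complex \<Rightarrow> real" where
  "b_inf G z1 z2 = (SUP w\<in>frontier G. cmod (z1 - z2) / max (cmod (z1 - w)) (cmod (z2 - w)))"

end

theory Submission
  imports Defs
begin

text \<open>Maximising \<open>|z1 - z2| / max |z1 - w| |z2 - w|\<close> over \<open>w \<in> \<real>\<close> amounts to minimising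
  \<open>d(t) = max |z1 - t| |z2 - t|\<close> over real \<open>t\<close>. Each distance \<open>|z - t|\<close> grows with
  \<open>|t - Re z|\<close>, so if the point \<open>r = Re zt\<close> where the perpendicular bisector of \<open>[z1, z2]\<close> meets
  \<open>\<real>\<close> lies strictly between \<open>Re z1\<close> and \<open>Re z2\<close>, moving away from \<open>r\<close> increases one of
  the two equal distances and \<open>r\<close> is the minimiser; the identity
  \<open>|z1 - z2| |z1 - cnj z2| = 2 |Re (z1 - z2)| |z1 - r|\<close> gives the first formula. Otherwise
  \<open>(Re z1 - Re z2)\<^sup>2 \<le> |Im z1\<^sup>2 - Im z2\<^sup>2|\<close>, so the foot of the higher point is within
  its height of the lower one, and \<open>d\<close> attains its trivial lower bound \<open>max (Im z1) (Im z2)\<close>.\<close>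

lemma frontier_upper_half_plane: "frontier upper_half_plane = \<real>"
proof -
  have "upper_half_plane = {z. 0 < \<i> \<bullet> z}"
    by (auto simp: upper_half_plane_def inner_complex_def)
  then have "frontier upper_half_plane = {z. \<i> \<bullet> z = 0}"
    using frontier_halfspace_gt[of \<i> 0] by simp
  also have "\<dots> = \<real>"
    by (auto simp: inner_complex_def complex_is_Real_iff)
  finally show ?thesis .
qed

definition bisector_crossing :: "complex \<Rightarrow> complex \<Rightarrow> real" where
  "bisector_crossing z1 z2 = (cmod z1 ^ 2 - cmod z2 ^ 2) / (2 * (Re z1 - Re z2))"

lemma bisector_crossing_eq:
  "(cnj z1 * z1 - cnj z2 * z2) / ((z1 - z2) + (cnj z1 - cnj z2)) = of_real (bisector_crossing z1 z2)"
proof -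
  have "cnj z1 * z1 - cnj z2 * z2 = of_real (cmod z1 ^ 2 - cmod z2 ^ 2)"
    unfolding cmod_power2 by (simp add: complex_eq_iff power2_eq_square)
  moreover have "(z1 - z2) + (cnj z1 - cnj z2) = of_real (2 * (Re z1 - Re z2))"
    by (simp add: complex_eq_iff)
  ultimately show ?thesis
    by (simp add: bisector_crossing_def)
qed

lemma bisector_crossing_mult:
  assumes "Re z1 \<noteq> Re z2"
  shows "bisector_crossing z1 z2 * (2 * (Re z1 - Re z2)) = (Re z1 ^ 2 + Im z1 ^ 2) - (Re z2 ^ 2 + Im z2 ^ 2)"
  using assms by (simp add: bisector_crossing_def cmod_power2)

lemma cmod_diff_of_real_sq: "cmod (z - of_real t) ^ 2 = (t - Re z) ^ 2 + Im z ^ 2"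
  by (simp add: cmod_power2 power2_commute)

lemma cmod_diff_of_real_mono:
  assumes "\<bar>r - Re z\<bar> \<le> \<bar>t - Re z\<bar>"
  shows "cmod (z - of_real r) \<le> cmod (z - of_real t)"
proof -
  have "(r - Re z) ^ 2 \<le> (t - Re z) ^ 2"
    using assms by (simp add: abs_le_square_iff)
  then have "cmod (z - of_real r) ^ 2 \<le> cmod (z - of_real t) ^ 2"
    by (simp add: cmod_diff_of_real_sq)
  then show ?thesis
    by (simp add: power2_le_iff_abs_le)
qed

lemma bisector_crossing_equidistant:
  assumes "Re z1 \<noteq> Re z2"
  shows "cmod (z1 - of_real (bisector_crossing z1 z2)) = cmod (z2 - of_real (bisector_crossing z1 z2))"
proof -
  define r where "r = bisector_crossing z1 z2"
  have "r * (2 * (Re z1 - Re z2)) = (Re z1 ^ 2 + Im z1 ^ 2) - (Re z2 ^ 2 + Im z2 ^ 2)"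
    unfolding r_def using assms by (rule bisector_crossing_mult)
  then have "cmod (z1 - of_real r) ^ 2 = cmod (z2 - of_real r) ^ 2"
    unfolding cmod_diff_of_real_sq by (simp add: power2_eq_square algebra_simps)
  then show ?thesis
    unfolding r_def by simp
qed

lemma max_dist_minimal_at_equidistant:
  assumes "min (Re z1) (Re z2) < r" and "r < max (Re z1) (Re z2)"
    and equidistant: "cmod (z1 - of_real r) = cmod (z2 - of_real r)"
  shows "max (cmod (z1 - of_real r)) (cmod (z2 - of_real r))
      \<le> max (cmod (z1 - of_real t)) (cmod (z2 - of_real t))"
proof -
  have "cmod (z1 - of_real r) \<le> cmod (z1 - of_real t) \<or> cmod (z2 - of_real r) \<le> cmod (z2 - of_real t)"
    using assms(1,2)
    by (cases "r \<le> t"; cases "Re z1 < Re z2") (auto intro!: cmod_diff_of_real_mono)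
  then show ?thesis
    using equidistant by auto
qed

lemma bisector_crossing_outside:
  assumes "\<not> (Re z1 \<noteq> Re z2 \<and> min (Re z1) (Re z2) < bisector_crossing z1 z2
      \<and> bisector_crossing z1 z2 < max (Re z1) (Re z2))"
  shows "(Re z1 - Re z2) ^ 2 \<le> \<bar>Im z1 ^ 2 - Im z2 ^ 2\<bar>"
proof (cases "Re z1 = Re z2")
  case False
  define r where "r = bisector_crossing z1 z2"
  define D where "D = (Re z1 - Re z2) ^ 2"
  define \<Delta> where "\<Delta> = Im z1 ^ 2 - Im z2 ^ 2"
  have r: "r * (2 * (Re z1 - Re z2)) = (Re z1 ^ 2 + Im z1 ^ 2) - (Re z2 ^ 2 + Im z2 ^ 2)"
    unfolding r_def using False by (rule bisector_crossing_mult)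
  have outside: "0 \<le> (r - Re z1) * (r - Re z2)"
    using assms False unfolding r_def[symmetric]
    by (cases "Re z1 < Re z2") (auto simp: min_def max_def not_less intro: mult_nonneg_nonneg mult_nonpos_nonpos)
  have "(r - Re z1) * (2 * (Re z1 - Re z2)) = \<Delta> - D" "(r - Re z2) * (2 * (Re z1 - Re z2)) = \<Delta> + D"
    using r unfolding D_def \<Delta>_def by (simp_all add: power2_eq_square algebra_simps)
  then have "(\<Delta> - D) * (\<Delta> + D) = ((r - Re z1) * (2 * (Re z1 - Re z2))) * ((r - Re z2) * (2 * (Re z1 - Re z2)))"
    by simp
  also have "\<dots> = (r - Re z1) * (r - Re z2) * (2 * (Re z1 - Re z2)) ^ 2"
    by (simp add: power2_eq_square algebra_simps)
  also have "\<dots> \<ge> 0"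
    using outside by simp
  finally have "D ^ 2 \<le> \<Delta> ^ 2"
    by (simp add: power2_eq_square algebra_simps)
  then show ?thesis
    unfolding D_def \<Delta>_def by (metis abs_le_square_iff abs_of_nonneg zero_le_power2)
qed simp

lemma max_Im_le_max_dist:
  "max \<bar>Im z1\<bar> \<bar>Im z2\<bar> \<le> max (cmod (z1 - of_real t)) (cmod (z2 - of_real t))"
  using abs_Im_le_cmod[of "z1 - of_real t"] abs_Im_le_cmod[of "z2 - of_real t"] by auto

lemma max_dist_at_Re:
  assumes "(Re z1 - Re z2) ^ 2 + Im z2 ^ 2 \<le> Im z1 ^ 2" and "0 \<le> Im z1"
  shows "max (cmod (z1 - of_real (Re z1))) (cmod (z2 - of_real (Re z1))) = Im z1"
proof -
  have "cmod (z2 - of_real (Re z1)) ^ 2 \<le> Im z1 ^ 2"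
    using assms(1) by (simp add: cmod_diff_of_real_sq power2_commute)
  then have "cmod (z2 - of_real (Re z1)) \<le> Im z1"
    using assms(2) by (simp add: power2_le_iff_abs_le)
  moreover have "cmod (z1 - of_real (Re z1)) = Im z1"
    using assms(2) by (simp add: cmod_def)
  ultimately show ?thesis
    by simp
qed

lemma max_dist_attains_max_Im:
  assumes "0 < Im z1" and "0 < Im z2"
    and "(Re z1 - Re z2) ^ 2 \<le> \<bar>Im z1 ^ 2 - Im z2 ^ 2\<bar>"
  obtains t where "max (cmod (z1 - of_real t)) (cmod (z2 - of_real t)) = max (Im z1) (Im z2)"
proof (cases "Im z2 \<le> Im z1")
  case True
  then have "Im z2 ^ 2 \<le> Im z1 ^ 2"
    using assms(2) by (simp add: power_mono)
  then have "max (cmod (z1 - of_real (Re z1))) (cmod (z2 - of_real (Re z1))) = Im z1"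
    using assms by (intro max_dist_at_Re) auto
  with True that show ?thesis
    by (simp add: max_absorb1)
next
  case False
  then have "Im z1 ^ 2 \<le> Im z2 ^ 2"
    using assms(1) by (simp add: power_mono)
  then have "max (cmod (z2 - of_real (Re z2))) (cmod (z1 - of_real (Re z2))) = Im z2"
    using assms by (intro max_dist_at_Re) (auto simp: power2_commute)
  with False that show ?thesis
    by (simp add: max.commute max_absorb2)
qed

lemma b_inf_upper_half_plane_eq_min:
  assumes "z1 \<in> upper_half_plane"
    and minimal: "\<And>t. max (cmod (z1 - of_real t0)) (cmod (z2 - of_real t0))
      \<le> max (cmod (z1 - of_real t)) (cmod (z2 - of_real t))"
  shows "b_inf upper_half_plane z1 z2
    = cmod (z1 - z2) / max (cmod (z1 - of_real t0)) (cmod (z2 - of_real t0))"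
proof -
  define d where "d t = max (cmod (z1 - of_real t)) (cmod (z2 - of_real t))" for t
  have "0 < cmod (z1 - of_real t0)"
    using assms(1) by (auto simp: upper_half_plane_def)
  then have d_pos: "0 < d t0"
    by (simp add: d_def less_max_iff_disj)
  have "b_inf upper_half_plane z1 z2 = (SUP t. cmod (z1 - z2) / d t)"
    unfolding b_inf_def frontier_upper_half_plane Reals_def by (simp add: image_image d_def)
  also have "\<dots> = cmod (z1 - z2) / d t0"
  proof (rule cSup_eq_maximum)
    show "cmod (z1 - z2) / d t0 \<in> range (\<lambda>t. cmod (z1 - z2) / d t)"
      by (rule rangeI)
    show "x \<le> cmod (z1 - z2) / d t0" if x: "x \<in> range (\<lambda>t. cmod (z1 - z2) / d t)" for x
    proof -
      obtain t where "x = cmod (z1 - z2) / d t"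
        using x by blast
      moreover have "d t0 \<le> d t"
        unfolding d_def by (rule minimal)
      ultimately show ?thesis
        using d_pos by (simp add: divide_left_mono)
    qed
  qed
  finally show ?thesis
    by (simp add: d_def)
qed

lemma cmod_diff_mult_cmod_diff_cnj:
  assumes "Re z1 \<noteq> Re z2"
  shows "cmod (z1 - z2) * cmod (z1 - cnj z2)
    = 2 * \<bar>Re (z1 - z2)\<bar> * cmod (z1 - of_real (bisector_crossing z1 z2))"
proof -
  define r where "r = bisector_crossing z1 z2"
  define D where "D = (Re z1 - Re z2) ^ 2"
  define \<Delta> where "\<Delta> = Im z1 ^ 2 - Im z2 ^ 2"
  have "r * (2 * (Re z1 - Re z2)) = (Re z1 ^ 2 + Im z1 ^ 2) - (Re z2 ^ 2 + Im z2 ^ 2)"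
    unfolding r_def using assms by (rule bisector_crossing_mult)
  then have r: "(r - Re z1) * (2 * (Re z1 - Re z2)) = \<Delta> - D"
    unfolding D_def \<Delta>_def by (simp add: power2_eq_square algebra_simps)
  have "(cmod (z1 - z2) * cmod (z1 - cnj z2)) ^ 2 = (D + (Im z1 - Im z2) ^ 2) * (D + (Im z1 + Im z2) ^ 2)"
    by (simp add: power_mult_distrib cmod_power2 D_def)
  also have "\<dots> = (\<Delta> - D) ^ 2 + 4 * D * Im z1 ^ 2"
    by (simp add: D_def \<Delta>_def power2_eq_square algebra_simps)
  also have "\<dots> = 4 * D * cmod (z1 - of_real r) ^ 2"
    unfolding cmod_diff_of_real_sq r[symmetric] by (simp add: D_def power2_eq_square algebra_simps)
  also have "\<dots> = (2 * \<bar>Re (z1 - z2)\<bar> * cmod (z1 - of_real r)) ^ 2"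
    by (simp add: D_def power_mult_distrib)
  finally show ?thesis
    unfolding r_def by simp
qed

theorem theorem3p26:
  fixes z1 z2 :: complex
  assumes "z1 \<in> upper_half_plane" and "z2 \<in> upper_half_plane"
  defines "zt \<equiv> (cnj z1 * z1 - cnj z2 * z2) / ((z1 - z2) + (cnj z1 - cnj z2))"
  shows "(Re z1 \<noteq> Re z2 \<longrightarrow> zt \<in> \<real>) \<and>
    b_inf upper_half_plane z1 z2 =
      (if Re z1 \<noteq> Re z2 \<and> min (Re z1) (Re z2) < Re zt \<and> Re zt < max (Re z1) (Re z2)
       then 2 * \<bar>Re (z1 - z2)\<bar> / cmod (z1 - cnj z2)
       else cmod (z1 - z2) / max (Im z1) (Im z2))"
proof -
  have Im_pos: "0 < Im z1" "0 < Im z2"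
    using assms(1,2) by (auto simp: upper_half_plane_def)
  define r where "r = bisector_crossing z1 z2"
  have zt: "zt = of_real r"
    unfolding zt_def r_def by (rule bisector_crossing_eq)
  show ?thesis
  proof (cases "Re z1 \<noteq> Re z2 \<and> min (Re z1) (Re z2) < r \<and> r < max (Re z1) (Re z2)")
    case True
    then have "cmod (z1 - of_real r) = cmod (z2 - of_real r)"
      unfolding r_def by (blast intro: bisector_crossing_equidistant)
    then have "b_inf upper_half_plane z1 z2 = cmod (z1 - z2) / cmod (z1 - of_real r)"
      using True assms(1) max_dist_minimal_at_equidistant
      by (subst b_inf_upper_half_plane_eq_min[of _ r]) auto
    also have "\<dots> = 2 * \<bar>Re (z1 - z2)\<bar> / cmod (z1 - cnj z2)"
    proof -
      have "z1 - of_real r \<noteq> 0" "z1 - cnj z2 \<noteq> 0"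
        using Im_pos by (auto simp: complex_eq_iff)
      then show ?thesis
        using True cmod_diff_mult_cmod_diff_cnj[of z1 z2] by (simp add: frac_eq_eq r_def)
    qed
    finally show ?thesis
      using True zt by simp
  next
    case False
    obtain t0 where t0: "max (cmod (z1 - of_real t0)) (cmod (z2 - of_real t0)) = max (Im z1) (Im z2)"
      using max_dist_attains_max_Im[OF Im_pos bisector_crossing_outside] False r_def by blast
    have "max (Im z1) (Im z2) \<le> max (cmod (z1 - of_real t)) (cmod (z2 - of_real t))" for t
      using max_Im_le_max_dist[of z1 z2 t] Im_pos by simp
    then have "b_inf upper_half_plane z1 z2 = cmod (z1 - z2) / max (Im z1) (Im z2)"
      using b_inf_upper_half_plane_eq_min[OF assms(1), of t0 z2] t0 by simp
    with False zt show ?thesis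
      by auto
  qed
qed

end
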